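(* Let $A\in\Omega^1([0,1],\mathfrak g)$ (formal, i.e. treated as an infinitesimal/formal variable) and let $A_T$, $T\ge0$, be the solution of the flow equation $\partial_TA_T=-\mathrm{d}_{A_T}\kappa_{\mathcal A}(A_T)$ with $A_0=A$ (the flow $\Phi_T$ of $-H^{\mathrm{cl}}$ restricted to fields with $c=A^+=c^+=0$). Then $$\pi^{\mathrm{cl}}_{\mathrm{int}}(A)=\lim_{T\to\infty}\pi(\Phi_T(A))=-e_I\,\log P\exp\Big(-\int_0^1A\Big)\in C^1(I,\mathfrak g)\cong\mathfrak g,$$ i.e. $\lim_{T\to\infty}\int_0^1A_T=-\log P\exp(-\int_0^1A)$, while the other components ($c_0,c_1$ and the chain components) of $\pi^{\mathrm{cl}}_{\mathrm{int}}(A)$ vanish.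
   Context: 1d $BF$ theory on $I=[0,1]$ with unimodular Lie algebra $\mathfrak g$: fields $\mathcal A=c+A\in\Omega^\bullet(I,\mathfrak g)[1]$ ($c$ a 0-form of ghost number 1, $A$ a 1-form) and $\mathcal B=A^++c^+\in\Omega^\bullet_{\mathrm{distr}}(I,\mathfrak g^* )[-1]$; action $S=\int_I\langle\mathcal B,\mathrm{d}\mathcal A+\frac12[\mathcal A,\mathcal A]\rangle$. Infrared fields: cellular cochains $C^\bullet(I,\mathfrak g)[1]$ with basis $e_0,e_1,e_I$ and cellular chains $C_{-\bullet}(I,\mathfrak g^* )[-2]$ with basis $e^0,e^1,e^I$. Whitney–Dupont SDR: $\pi(c+A,A^++c^+)=\big(e_0c(0)+e_1c(1)+e_I\int_0^1A,\ e^0\int_0^1(1-t)c^++e^1\int_0^1tc^++e^I\int_0^1\mathrm{d}t\,A^+\big)$; chain homotopy on the $\mathcal A$-sector $\kappa_{\mathcal A}(c+A)(t)=\int_0^1(\theta(t-t')-t)A(t')$ (and dual one on the $\mathcal B$-sector). $\mathrm{d}_Af=\mathrm{d}f+[A,f]$. $H^{\mathrm{cl}}=[\hat\kappa,\{S,-\}]$ is the classical TQM vector field, whose restriction to fields $(A,0)$ is $\int_0^1\langle\mathrm{d}_A\kappa_{\mathcal A}(A),\frac{\delta}{\delta A}\rangle$; $\Phi_T$ is the flow of $-H^{\mathrm{cl}}$. Path-ordered exponential convention: $P\exp(-\int_0^1A)=\lim\,(1-A(t_N)\Delta t)\cdots(1-A(t_1)\Delta t)$ with later times to the left (so $-\log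 P\exp(-\int_0^1 A)=\int_0^1A-\frac12\int_0^1\mathrm{d}t\int_0^t\mathrm{d}t'[\underline A(t),\underline A(t')]+\cdots$ with $A=\mathrm{d}t\,\underline A$, the Magnus expansion). *)

theory Defs
  imports "HOL-Analysis.Analysis"
begin

text \<open>The Lie algebra g is realised as a real Banach algebra with the commutator bracket.
A g-valued 1-form A = dt a(t) on I = [0,1] is represented by its coefficient a.\<close>

definition lie_bracket :: "'a::real_normed_algebra \<Rightarrow> 'a \<Rightarrow> 'a" where
  "lie_bracket x y = x * y - y * x"

definition kappaA :: "(real \<Rightarrow> 'a::real_normed_algebra) \<Rightarrow> real \<Rightarrow> 'a" where
  "kappaA a t = integral {0..1} (\<lambda>s. ((if s < t then 1 else 0) - t) *\<^sub>R a s)"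

definition covd :: "(real \<Rightarrow> 'a::real_normed_algebra) \<Rightarrow> (real \<Rightarrow> 'a) \<Rightarrow> real \<Rightarrow> 'a" where
  "covd a f t = vector_derivative f (at t within {0..1}) + lie_bracket (a t) (f t)"

text \<open>Path-ordered exponential P exp(- int_0^1 A) = U(1), where U(0) = 1 and
U' = - a U (later times to the left).\<close>
definition pexp_neg :: "(real \<Rightarrow> 'a::{real_normed_algebra_1,banach}) \<Rightarrow> 'a" where
  "pexp_neg a = (THE x. \<exists>U. U 0 = 1 \<and>
      (\<forall>t\<in>{0..1}. (U has_vector_derivative (- (a t * U t))) (at t within {0..1})) \<and> U 1 = x)"

definition alg_log :: "'a::{real_normed_algebra_1,banach} \<Rightarrow> 'a" where
  "alg_log x = (\<Sum>n. ((-1) ^ n / real (Suc n)) *\<^sub>R (x - 1) ^ Suc n)"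

end

(*
  Split A_T = dt aa_T into its mean m_T = int_0^1 aa_T and its fluctuation dev_T = aa_T - m_T.
  Since kappa(A_T) is the primitive of dev_T vanishing at both endpoints, the flow reads
  dev' = -dev + O(|aa| |dev|) and m' = -int_0^1 [aa, kappa(aa)], which is quadratic in the small
  quantities.  For small initial data a continuity argument shows that dev_T and m'_T decay like
  exp(-T/2); hence m_T converges to some c and aa_T tends to the constant c uniformly.

  On the other hand, -d_A kappa(A) is an infinitesimal gauge transformation whose parameter
  kappa(A) vanishes at t = 1, so the holonomy P exp(-int A_T) does not depend on T.  Comparing it
  with the holonomy exp(-c) of the constant limit gives P exp(-int A) = exp(-c), that is,
  lim int A_T = c = -log P exp(-int A).
*)
theory Submission
  imports Defs "HOL-Real_Asymp.Real_Asymp"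
begin

section \<open>Curves on an interval\<close>

lemma norm_diff_le_majorant:
  fixes f :: "real \<Rightarrow> 'a::banach"
  assumes ab: "a \<le> b"
    and f': "\<And>x. x \<in> {a..b} \<Longrightarrow> (f has_vector_derivative f' x) (at x within {a..b})"
    and g': "\<And>x. x \<in> {a..b} \<Longrightarrow> (g has_real_derivative g' x) (at x within {a..b})"
    and le: "\<And>x. x \<in> {a..b} \<Longrightarrow> norm (f' x) \<le> g' x"
  shows "norm (f b - f a) \<le> g b - g a"
proof -
  have F: "(f' has_integral (f b - f a)) {a..b}"
    by (rule fundamental_theorem_of_calculus[OF ab f'])
  have G: "(g' has_integral (g b - g a)) {a..b}"
    by (rule fundamental_theorem_of_calculus[OF ab])
       (use g' in \<open>auto simp: has_real_derivative_iff_has_vector_derivative\<close>)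
  have "norm (integral {a..b} f') \<le> integral {a..b} g'"
    by (rule integral_norm_bound_integral) (use F G le in auto)
  then show ?thesis using F G by (simp add: integral_unique)
qed

lemma gronwall_contraction:
  fixes f :: "real \<Rightarrow> 'a::banach"
  assumes f0: "f 0 = 0"
    and f': "\<And>t. t \<in> {0..1} \<Longrightarrow> (f has_vector_derivative f' t) (at t within {0..1})"
    and bound: "\<And>t. t \<in> {0..1} \<Longrightarrow> norm (f' t) \<le> q * norm (f t) + \<beta>"
    and q: "0 \<le> q" "q < 1" and \<beta>: "0 \<le> \<beta>" and t: "t \<in> {0..1}"
  shows "norm (f t) \<le> \<beta> / (1 - q)"
proof -
  have "continuous_on {0..1} (\<lambda>t. norm (f t))"
    using f' by (intro continuous_on_norm continuous_on_vector_derivative)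
  then obtain t0 where t0: "t0 \<in> {0..1}" and max: "\<And>s. s \<in> {0..1} \<Longrightarrow> norm (f s) \<le> norm (f t0)"
    using continuous_attains_sup[of "{0..1}" "\<lambda>t. norm (f t)"] by fastforce
  define M where "M = norm (f t0)"
  have "norm (f s) \<le> q * M + \<beta>" if s: "s \<in> {0..1}" for s
  proof -
    have "norm (f s - f 0) \<le> (q * M + \<beta>) * s - (q * M + \<beta>) * 0"
    proof (rule norm_diff_le_majorant[where f' = f' and g' = "\<lambda>_. q * M + \<beta>"])
      fix x assume "x \<in> {0..s}"
      then have x: "x \<in> {0..1}" using s by auto
      show "(f has_vector_derivative f' x) (at x within {0..s})"
        by (rule has_vector_derivative_within_subset[OF f'[OF x]]) (use s in auto)
      show "((\<lambda>x. (q * M + \<beta>) * x) has_real_derivative q * M + \<beta>) (at x within {0..s})"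
        by (auto intro!: derivative_eq_intros)
      have "q * norm (f x) \<le> q * M"
        using max[OF x] q by (simp add: M_def mult_left_mono)
      then show "norm (f' x) \<le> q * M + \<beta>" using bound[OF x] by linarith
    qed (use s in auto)
    also have "\<dots> \<le> q * M + \<beta>"
      using s q \<beta> by (simp add: M_def mult_left_le)
    finally show ?thesis using f0 by simp
  qed
  then have "M \<le> q * M + \<beta>" using t0 by (simp add: M_def)
  then have "M \<le> \<beta> / (1 - q)" using q by (simp add: field_simps)
  then show ?thesis using max[OF t] by (simp add: M_def)
qed

lemma continuous_on_prod_slice_left:
  assumes "continuous_on (U \<times> V) (\<lambda>(x, t). F x t)" "x \<in> U"
  shows "continuous_on V (F x)"
proof -
  have "continuous_on V (\<lambda>t. (x, t))" "(\<lambda>t. (x, t)) ` V \<subseteq> U \<times> V"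
    using assms(2) by (auto intro!: continuous_intros)
  then show ?thesis using continuous_on_compose2[OF assms(1)] by fastforce
qed

lemma continuous_on_prod_slice_right:
  assumes "continuous_on (U \<times> V) (\<lambda>(x, t). F x t)" "t \<in> V"
  shows "continuous_on U (\<lambda>x. F x t)"
proof -
  have "continuous_on U (\<lambda>x. (x, t))" "(\<lambda>x. (x, t)) ` U \<subseteq> U \<times> V"
    using assms(2) by (auto intro!: continuous_intros)
  then show ?thesis using continuous_on_compose2[OF assms(1)] by fastforce
qed

lemma continuous_on_prod_uniformE:
  fixes F :: "'a::metric_space \<Rightarrow> 'b::topological_space \<Rightarrow> 'c::metric_space"
  assumes "continuous_on (U \<times> C) (\<lambda>(x, t). F x t)" "compact C" "x0 \<in> U" "e > 0"
  obtains r where "r > 0" "\<And>x t. x \<in> U \<Longrightarrow> dist x x0 < r \<Longrightarrow> t \<in> C \<Longrightarrow> dist (F x t) (F x0 t) \<le> e"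
proof -
  obtain X0 where "x0 \<in> X0" "open X0"
    and near: "\<forall>x\<in>X0 \<inter> U. \<forall>t\<in>C. dist ((\<lambda>(x, t). F x t) (x, t)) ((\<lambda>(x, t). F x t) (x0, t)) \<le> e"
    by (rule continuous_on_prod_compactE[OF assms])
  then obtain r where "r > 0" "ball x0 r \<subseteq> X0"
    by (meson open_contains_ball)
  show thesis
  proof (rule that[OF \<open>r > 0\<close>])
    fix x t assume "x \<in> U" "dist x x0 < r" "t \<in> C"
    moreover from this have "x \<in> X0"
      using \<open>ball x0 r \<subseteq> X0\<close> by (auto simp: dist_commute)
    ultimately show "dist (F x t) (F x0 t) \<le> e" using near by auto
  qed
qed

lemma continuous_on_indefinite_integral_prod:
  fixes F :: "'a::metric_space \<Rightarrow> real \<Rightarrow> 'b::banach"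
  assumes cont: "continuous_on (U \<times> {0..1}) (\<lambda>(x, t). F x t)"
  shows "continuous_on (U \<times> {0..1}) (\<lambda>(x, t). integral {0..t} (F x))"
proof -
  \<comment> \<open>substituting \<open>s = t * u\<close> moves the variable endpoint into the integrand\<close>
  have rescale: "integral {0..t} (F x) = t *\<^sub>R integral {0..1} (\<lambda>u. F x (t * u))"
    if "x \<in> U" "t \<in> {0..1}" for x t
  proof (cases "t = 0")
    case False
    then have "(\<lambda>u. u / t) ` {0..t} = {0..1}"
      using that by (auto simp: image_iff field_simps intro!: bexI[where x = "t * _"])
    with integral_stretch_real[of t 0 t "F x"] False that show ?thesis by simp
  qed simp
  have "continuous_on ((U \<times> {0..1::real}) \<times> {0..1::real}) (\<lambda>p. (fst (fst p), snd (fst p) * snd p))"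
    by (intro continuous_intros)
  moreover have "(\<lambda>p. (fst (fst p), snd (fst p) * snd p)) ` ((U \<times> {0..1}) \<times> {0..1}) \<subseteq> U \<times> {0..1::real}"
    by (auto simp: mult_le_one)
  ultimately have "continuous_on ((U \<times> {0..1}) \<times> {0..1}) (\<lambda>((x, t), u). F x (t * u))"
    using continuous_on_compose2[OF cont] by (fastforce simp: split_beta)
  then have "continuous_on (U \<times> {0..1}) (\<lambda>(x, t). integral {0..1} (\<lambda>u. F x (t * u)))"
    using integral_continuous_on_param[of "U \<times> {0..1}" 0 1 "\<lambda>(x, t) u. F x (t * u)"]
    by (simp add: split_beta cbox_interval)
  then have "continuous_on (U \<times> {0..1}) (\<lambda>(x, t). t *\<^sub>R integral {0..1} (\<lambda>u. F x (t * u)))"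
    by (auto simp: split_beta intro!: continuous_intros)
  then show ?thesis
    by (rule continuous_on_eq) (auto simp: rescale)
qed

lemma continuity_argument:
  fixes F :: "real \<Rightarrow> real \<Rightarrow> real"
  assumes cont: "continuous_on ({0..} \<times> {0..1}) (\<lambda>(s, t). F s t)"
    and init: "\<And>t. t \<in> {0..1} \<Longrightarrow> F 0 t \<le> 1"
    and improve: "\<And>T t. T \<ge> 0 \<Longrightarrow> (\<And>s t. s \<in> {0..T} \<Longrightarrow> t \<in> {0..1} \<Longrightarrow> F s t \<le> 1) \<Longrightarrow>
        t \<in> {0..1} \<Longrightarrow> F T t \<le> c"
    and c: "c < 1" and T: "T \<ge> 0" and t: "t \<in> {0..1}"
  shows "F T t \<le> 1"
proof (rule ccontr)
  define S where "S = {s. s \<ge> 0 \<and> (\<exists>t\<in>{0..1}. F s t > 1)}"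
  assume "\<not> F T t \<le> 1"
  then have "T \<in> S" using T t unfolding S_def by (auto simp: not_le)
  then have ne: "S \<noteq> {}" and bdd: "bdd_below S"
    by (auto simp: S_def intro: bdd_belowI[of _ 0])
  define \<tau> where "\<tau> = Inf S"
  have \<tau>0: "\<tau> \<ge> 0" unfolding \<tau>_def by (rule cInf_greatest[OF ne]) (auto simp: S_def)
  have before: "F s t \<le> 1" if "0 \<le> s" "s < \<tau>" "t \<in> {0..1}" for s t
    using cInf_lower[OF _ bdd, of s] that by (force simp: S_def \<tau>_def)
  have at: "F \<tau> t \<le> 1" if t: "t \<in> {0..1}" for t
  proof (cases "\<tau> = 0")
    case True
    with init t show ?thesis by simp
  next
    case False
    then have "closure {0..<\<tau>} = {0..\<tau>}" using \<tau>0 by simp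
    moreover have "continuous_on {0..\<tau>} (\<lambda>s. F s t)"
      by (rule continuous_on_subset[OF continuous_on_prod_slice_right[OF cont t]]) auto
    ultimately show ?thesis
      using continuous_le_on_closure[of "{0..<\<tau>}" "\<lambda>s. F s t" \<tau> 1] before[OF _ _ t] \<tau>0 by auto
  qed
  have upto: "F s t \<le> 1" if "s \<in> {0..\<tau>}" "t \<in> {0..1}" for s t
    using before[of s t] at[of t] that by (cases "s = \<tau>") auto
  have at_c: "F \<tau> t \<le> c" if "t \<in> {0..1}" for t
    using improve[OF \<tau>0 upto that] .
  obtain r where "r > 0"
    and near: "\<And>s t. s \<in> {0..} \<Longrightarrow> dist s \<tau> < r \<Longrightarrow> t \<in> {0..1} \<Longrightarrow> dist (F s t) (F \<tau> t) \<le> (1 - c) / 2"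
    using continuous_on_prod_uniformE[OF cont compact_Icc, of \<tau> "(1 - c) / 2"] \<tau>0 c by auto
  obtain s where "s \<in> S" "s < \<tau> + r"
    using cInf_less_iff[OF ne bdd, of "\<tau> + r"] \<open>r > 0\<close> by (auto simp: \<tau>_def)
  moreover have "\<tau> \<le> s" unfolding \<tau>_def by (rule cInf_lower[OF \<open>s \<in> S\<close> bdd])
  ultimately obtain t where "t \<in> {0..1}" "F s t > 1" "s \<ge> 0" "dist s \<tau> < r"
    by (auto simp: S_def dist_real_def)
  with near at_c c show False by (force simp: dist_real_def abs_le_iff)
qed

lemma has_vector_derivative_uniformE:
  fixes F G :: "real \<Rightarrow> 'b::topological_space \<Rightarrow> 'a::banach"
  assumes F': "\<And>x t. x \<ge> 0 \<Longrightarrow> t \<in> C \<Longrightarrow> ((\<lambda>x. F x t) has_vector_derivative G x t) (at x within {0..})"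
    and G: "continuous_on ({0..} \<times> C) (\<lambda>(x, t). G x t)" and C: "compact C"
    and x0: "x0 \<ge> 0" and e: "e > 0"
  obtains r where "r > 0" "\<And>x t. x \<ge> 0 \<Longrightarrow> \<bar>x - x0\<bar> < r \<Longrightarrow> t \<in> C \<Longrightarrow>
    norm (F x t - F x0 t - (x - x0) *\<^sub>R G x0 t) \<le> e * \<bar>x - x0\<bar>"
proof -
  obtain r where "r > 0"
    and near: "\<And>x t. x \<in> {0..} \<Longrightarrow> dist x x0 < r \<Longrightarrow> t \<in> C \<Longrightarrow> dist (G x t) (G x0 t) \<le> e"
    using continuous_on_prod_uniformE[OF G C, of x0 e] x0 e by auto
  define f where "f t x = F x t - x *\<^sub>R G x0 t" for t x
  have increment: "norm (f t hi - f t lo) \<le> e * (hi - lo)"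
    if "0 \<le> lo" "lo \<le> hi" "\<bar>lo - x0\<bar> < r" "\<bar>hi - x0\<bar> < r" "t \<in> C" for lo hi t
  proof -
    have "norm (f t hi - f t lo) \<le> e * hi - e * lo"
    proof (rule norm_diff_le_majorant[where f' = "\<lambda>x. G x t - G x0 t" and g' = "\<lambda>_. e"])
      fix x assume x: "x \<in> {lo..hi}"
      have "((\<lambda>x. F x t - x *\<^sub>R G x0 t) has_vector_derivative G x t - G x0 t) (at x within {0..})"
        using F'[of x t] x that by (auto intro!: derivative_eq_intros)
      then show "(f t has_vector_derivative G x t - G x0 t) (at x within {lo..hi})"
        unfolding f_def by (rule has_vector_derivative_within_subset) (use that in auto)
      show "((*) e has_real_derivative e) (at x within {lo..hi})"
        by (auto intro!: derivative_eq_intros)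
      show "norm (G x t - G x0 t) \<le> e"
        using near[of x t] x that by (auto simp: dist_norm)
    qed (use that in auto)
    then show ?thesis by (simp add: algebra_simps)
  qed
  show thesis
  proof (rule that[OF \<open>r > 0\<close>])
    fix x t assume "x \<ge> 0" "\<bar>x - x0\<bar> < r" "t \<in> C"
    moreover have "F x t - F x0 t - (x - x0) *\<^sub>R G x0 t = f t x - f t x0"
      by (simp add: f_def algebra_simps)
    ultimately show "norm (F x t - F x0 t - (x - x0) *\<^sub>R G x0 t) \<le> e * \<bar>x - x0\<bar>"
      using increment[of x0 x t] increment[of x x0 t] x0 \<open>r > 0\<close>
      by (cases "x0 \<le> x") (auto simp: norm_minus_commute)
  qed
qed

lemma tendsto_at_top_of_increment_bound:
  fixes f :: "real \<Rightarrow> 'a::banach"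
  assumes increment: "\<And>T1 T2. 0 \<le> T1 \<Longrightarrow> T1 \<le> T2 \<Longrightarrow> norm (f T2 - f T1) \<le> g T1"
    and g: "(g \<longlongrightarrow> 0) at_top"
  obtains c where "\<And>T. T \<ge> 0 \<Longrightarrow> norm (f T - c) \<le> g T" "(f \<longlongrightarrow> c) at_top"
proof -
  have g_seq: "(\<lambda>n. g (real n)) \<longlonglongrightarrow> 0"
    using g filterlim_real_sequentially by (rule filterlim_compose)
  have "Cauchy (\<lambda>n. f (real n))"
  proof (rule metric_CauchyI)
    fix e :: real assume "e > 0"
    then have "\<forall>\<^sub>F n in sequentially. g (real n) < e/2"
      by (intro order_tendstoD(2)[OF g_seq]) simp
    then obtain N where N: "g (real N) < e/2"
      using eventually_sequentially by auto
    have "dist (f (real m)) (f (real n)) < e" if "m \<ge> N" "n \<ge> N" for m n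
      using increment[of N m] increment[of N n] that N
        norm_triangle_ineq4[of "f (real m) - f (real N)" "f (real n) - f (real N)"]
      by (simp add: dist_norm)
    then show "\<exists>N. \<forall>m\<ge>N. \<forall>n\<ge>N. dist (f (real m)) (f (real n)) < e" by blast
  qed
  then obtain c where c: "(\<lambda>n. f (real n)) \<longlonglongrightarrow> c"
    using Cauchy_convergent_iff convergent_def by blast
  have bound: "norm (f T - c) \<le> g T" if "T \<ge> 0" for T
  proof -
    have "\<forall>\<^sub>F n in sequentially. norm (f (real n) - f T) \<le> g T"
      using eventually_ge_at_top[of "nat \<lceil>T\<rceil>"]
      by (rule eventually_mono) (use that in \<open>auto intro!: increment\<close>)
    then have "norm (c - f T) \<le> g T"
      by (rule tendsto_le[OF trivial_limit_sequentially tendsto_const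
            tendsto_norm[OF tendsto_diff[OF c tendsto_const]]])
    then show ?thesis by (simp add: norm_minus_commute)
  qed
  moreover have "\<forall>\<^sub>F T in at_top. norm (f T - c) \<le> g T"
    using eventually_ge_at_top[of "0::real"] by (rule eventually_mono) (rule bound)
  then have "((\<lambda>T. f T - c) \<longlongrightarrow> 0) at_top"
    by (rule Lim_null_comparison[OF _ g])
  then have "(f \<longlongrightarrow> c) at_top"
    by (rule LIM_zero_cancel)
  ultimately show thesis by (rule that)
qed

section \<open>The chain homotopy\<close>

lemma kappaA_eq:
  fixes f :: "real \<Rightarrow> 'a::{real_normed_algebra,banach}"
  assumes f: "continuous_on {0..1} f" and t: "t \<in> {0..1}"
  shows "kappaA f t = integral {0..t} f - t *\<^sub>R integral {0..1} f"
proof -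
  have int: "f integrable_on {0..t}"
    by (rule integrable_continuous_interval, rule continuous_on_subset[OF f]) (use t in auto)
  have Int: "{0..t} \<inter> {0..1} = {0..t}" using t by auto
  have restrict: "integral {0..1} (\<lambda>s. if s \<in> {0..t} then f s else 0) = integral {0..t} f"
    using integral_restrict_Int[where S = "{0..t}" and T = "{0..1}" and f = f] unfolding Int .
  have "(\<lambda>s. if s \<in> {0..t} then f s else 0) integrable_on {0..1}"
    using integrable_restrict_Int[where S = "{0..t}" and T = "{0..1}" and f = f] int unfolding Int by blast
  moreover have "(\<lambda>s. t *\<^sub>R f s) integrable_on {0..1}"
    by (intro integrable_cmul integrable_continuous_interval f)
  moreover have "kappaA f t = integral {0..1} (\<lambda>s. (if s \<in> {0..t} then f s else 0) - t *\<^sub>R f s)"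
    unfolding kappaA_def by (rule integral_spike[of "{t}"]) (auto simp: algebra_simps)
  ultimately show ?thesis using restrict by (simp add: integral_diff)
qed

lemma kappaA_endpoints:
  fixes f :: "real \<Rightarrow> 'a::{real_normed_algebra,banach}"
  assumes "continuous_on {0..1} f"
  shows "kappaA f 0 = 0" "kappaA f 1 = 0"
  using kappaA_eq[OF assms, of 0] kappaA_eq[OF assms, of 1] by auto

lemma kappaA_has_vector_derivative:
  fixes f :: "real \<Rightarrow> 'a::{real_normed_algebra,banach}"
  assumes f: "continuous_on {0..1} f" and t: "t \<in> {0..1}"
  shows "(kappaA f has_vector_derivative (f t - integral {0..1} f)) (at t within {0..1})"
proof -
  have "((\<lambda>u. integral {0..u} f - u *\<^sub>R integral {0..1} f) has_vector_derivative
      f t - integral {0..1} f) (at t within {0..1})"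
    using integral_has_vector_derivative[OF f t] by (auto intro!: derivative_eq_intros)
  then show ?thesis
    by (rule has_vector_derivative_transform_within[where d = 1]) (use t kappaA_eq[OF f] in auto)
qed

lemma vector_derivative_kappaA:
  fixes f :: "real \<Rightarrow> 'a::{real_normed_algebra,banach}"
  assumes "continuous_on {0..1} f" and t: "t \<in> {0..1}"
  shows "vector_derivative (kappaA f) (at t within {0..1}) = f t - integral {0..1} f"
  using vector_derivative_within_cbox[of 0 1 t "kappaA f"] kappaA_has_vector_derivative[OF assms] t
  by (simp add: cbox_interval)

section \<open>Parallel transport\<close>

definition transport :: "(real \<Rightarrow> 'a::real_normed_algebra_1) \<Rightarrow> (real \<Rightarrow> 'a) \<Rightarrow> bool" where
  "transport b U \<longleftrightarrow> U 0 = 1 \<and> (\<forall>t\<in>{0..1}. (U has_vector_derivative - (b t * U t)) (at t within {0..1}))"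

primrec picard_iterate :: "(real \<Rightarrow> 'a::{real_normed_algebra_1,banach}) \<Rightarrow> nat \<Rightarrow> real \<Rightarrow> 'a" where
  "picard_iterate b 0 = (\<lambda>t. 1)"
| "picard_iterate b (Suc n) = (\<lambda>t. - integral {0..t} (\<lambda>s. b s * picard_iterate b n s))"

context
  fixes b :: "real \<Rightarrow> 'a::{real_normed_algebra_1,banach}"
  assumes b_cont: "continuous_on {0..1} b"
begin

lemma continuous_on_picard_iterate: "continuous_on {0..1} (picard_iterate b n)"
proof (induction n)
  case (Suc n)
  then have "continuous_on {0..1} (\<lambda>s. b s * picard_iterate b n s)"
    using b_cont by (intro continuous_intros)
  then have "continuous_on {0..1} (\<lambda>t. integral {0..t} (\<lambda>s. b s * picard_iterate b n s))"
    by (rule continuous_on_vector_derivative[OF integral_has_vector_derivative])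
  then show ?case by (simp add: continuous_on_minus)
qed simp

lemma picard_iterate_has_vector_derivative:
  assumes "t \<in> {0..1}"
  shows "(picard_iterate b (Suc n) has_vector_derivative - (b t * picard_iterate b n t)) (at t within {0..1})"
proof -
  have "continuous_on {0..1} (\<lambda>s. b s * picard_iterate b n s)"
    using b_cont continuous_on_picard_iterate by (intro continuous_intros)
  then show ?thesis
    using assms by (auto intro!: derivative_eq_intros integral_has_vector_derivative)
qed

lemma norm_picard_iterate_le:
  assumes b_small: "\<And>t. t \<in> {0..1} \<Longrightarrow> norm (b t) \<le> 1/2" and t: "t \<in> {0..1}"
  shows "norm (picard_iterate b n t) \<le> (1/2) ^ n"
  using t
proof (induction n arbitrary: t)
  case (Suc n)
  have "norm (integral {0..t} (\<lambda>s. b s * picard_iterate b n s)) \<le> (1/2) ^ Suc n * (t - 0)"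
  proof (rule integral_bound)
    show "continuous_on {0..t} (\<lambda>s. b s * picard_iterate b n s)"
      by (rule continuous_on_subset[of "{0..1}"])
         (use b_cont continuous_on_picard_iterate Suc.prems in \<open>auto intro!: continuous_intros\<close>)
    fix s assume "s \<in> {0..t}"
    then have s: "s \<in> {0..1}" using Suc.prems by auto
    have "norm (b s * picard_iterate b n s) \<le> norm (b s) * norm (picard_iterate b n s)"
      by (rule norm_mult_ineq)
    also have "\<dots> \<le> 1/2 * (1/2) ^ n"
      using b_small[OF s] Suc.IH[OF s] by (intro mult_mono) auto
    finally show "norm (b s * picard_iterate b n s) \<le> (1/2) ^ Suc n" by simp
  qed (use Suc.prems in auto)
  also have "\<dots> \<le> (1/2) ^ Suc n"
    using Suc.prems by (simp add: mult_left_le)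
  finally show ?case by simp
qed simp

lemma picard_series_tail:
  assumes b_small: "\<And>t. t \<in> {0..1} \<Longrightarrow> norm (b t) \<le> 1/2" and t: "t \<in> {0..1}"
  shows "summable (\<lambda>n. picard_iterate b n t)"
    and "norm ((\<Sum>n. picard_iterate b n t) - (\<Sum>i<k. picard_iterate b i t)) \<le> 2 * (1/2) ^ k"
proof -
  note bound = norm_picard_iterate_le[OF b_small t]
  have geometric: "summable (\<lambda>n. (1/2::real) ^ n)" by (rule summable_geometric) simp
  show summable: "summable (\<lambda>n. picard_iterate b n t)"
    by (rule summable_norm_cancel, rule summable_norm_comparison_test[OF _ geometric]) (use bound in auto)
  have "(\<Sum>n. picard_iterate b n t) - (\<Sum>i<k. picard_iterate b i t) = (\<Sum>n. picard_iterate b (n + k) t)"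
    using suminf_split_initial_segment[OF summable, of k] by simp
  also have "norm \<dots> \<le> (\<Sum>n. (1/2) ^ k * (1/2::real) ^ n)"
  proof (rule norm_suminf_le)
    show "norm (picard_iterate b (n + k) t) \<le> (1/2) ^ k * (1/2) ^ n" for n
      using bound[of "n + k"] by (simp add: power_add mult.commute)
  qed (rule summable_mult[OF geometric])
  also have "\<dots> = 2 * (1/2) ^ k"
    by (simp add: suminf_mult[OF geometric] suminf_geometric)
  finally show "norm ((\<Sum>n. picard_iterate b n t) - (\<Sum>i<k. picard_iterate b i t)) \<le> 2 * (1/2) ^ k" .
qed

lemma transport_exists:
  assumes b_small: "\<And>t. t \<in> {0..1} \<Longrightarrow> norm (b t) \<le> 1/2"
  shows "\<exists>U. transport b U"
proof -
  define P' where "P' n t = (case n of 0 \<Rightarrow> 0 | Suc m \<Rightarrow> - (b t * picard_iterate b m t))" for n t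
  define U where "U t = (\<Sum>n. picard_iterate b n t)" for t
  have sum_P': "(\<Sum>i<Suc m. P' i t) = - (b t * (\<Sum>i<m. picard_iterate b i t))" for m t
    by (induction m) (simp_all add: P'_def distrib_left)
  have "picard_iterate b n 0 = (if n = 0 then 1 else 0)" for n
    by (cases n) simp_all
  then have start: "(\<lambda>n. picard_iterate b n 0) sums 1"
    using sums_single[of 0 "\<lambda>_. 1::'a"] by simp
  have "\<exists>g. \<forall>t\<in>{0..1}. (\<lambda>n. picard_iterate b n t) sums g t \<and>
      (g has_derivative (\<lambda>h. h *\<^sub>R - (b t * U t))) (at t within {0..1})"
  proof (rule has_derivative_series[where f = "picard_iterate b" and f' = "\<lambda>n t h. h *\<^sub>R P' n t"])
    show "(picard_iterate b n has_derivative (\<lambda>h. h *\<^sub>R P' n t)) (at t within {0..1})"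
      if "t \<in> {0..1}" for n t
      using picard_iterate_has_vector_derivative[OF that]
      by (cases n) (simp_all add: P'_def has_vector_derivative_def)
    fix e :: real assume "e > 0"
    have "(\<lambda>n. (2::real) * (1/2) ^ n) \<longlonglongrightarrow> 0" by real_asymp
    then have "\<forall>\<^sub>F n in sequentially. 2 * (1/2::real) ^ n < e \<and> n \<ge> 1"
      using \<open>e > 0\<close> by (intro eventually_conj order_tendstoD(2) eventually_ge_at_top) auto
    then show "\<forall>\<^sub>F n in sequentially. \<forall>t\<in>{0..1}. \<forall>h.
        norm ((\<Sum>i<n. h *\<^sub>R P' i t) - h *\<^sub>R - (b t * U t)) \<le> e * norm h"
    proof (rule eventually_mono, intro ballI allI)
      fix n :: nat and t h :: real
      assume n: "2 * (1/2::real) ^ n < e \<and> n \<ge> 1" and t: "t \<in> {0..1}"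
      then obtain m where m: "n = Suc m" by (cases n) auto
      have "(\<Sum>i<n. h *\<^sub>R P' i t) - h *\<^sub>R - (b t * U t)
          = h *\<^sub>R (b t * (U t - (\<Sum>i<m. picard_iterate b i t)))"
        unfolding m scaleR_sum_right[symmetric] sum_P' by (simp add: U_def algebra_simps)
      moreover have "norm (b t * (U t - (\<Sum>i<m. picard_iterate b i t))) \<le> 1/2 * (2 * (1/2) ^ m)"
        using b_small[OF t] picard_series_tail(2)[OF b_small t, of m]
        by (intro order_trans[OF norm_mult_ineq] mult_mono) (auto simp: U_def)
      ultimately show "norm ((\<Sum>i<n. h *\<^sub>R P' i t) - h *\<^sub>R - (b t * U t)) \<le> e * norm h"
        using n by (auto simp: m mult.commute[of e] intro!: mult_left_mono)
    qed
  qed (use start in auto)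
  then obtain g where g: "\<And>t. t \<in> {0..1} \<Longrightarrow> (\<lambda>n. picard_iterate b n t) sums g t \<and>
      (g has_derivative (\<lambda>h. h *\<^sub>R - (b t * U t))) (at t within {0..1})"
    by blast
  have "g t = U t" if "t \<in> {0..1}" for t
    using g[OF that] by (simp add: U_def sums_unique)
  moreover have "g 0 = 1"
    using g[of 0] start sums_unique2 by auto
  ultimately have "transport b g"
    using g by (simp add: transport_def has_vector_derivative_def)
  then show ?thesis by blast
qed

end

lemma transport_unique:
  fixes b :: "real \<Rightarrow> 'a::{real_normed_algebra_1,banach}"
  assumes b_small: "\<And>t. t \<in> {0..1} \<Longrightarrow> norm (b t) \<le> q" and q: "q < 1"
    and U: "transport b U" and V: "transport b V" and t: "t \<in> {0..1}"
  shows "U t = V t"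
proof -
  have "0 \<le> q" using b_small[of 0] by (auto intro: order_trans[OF norm_ge_zero])
  have "norm (U t - V t) \<le> 0 / (1 - q)"
  proof (rule gronwall_contraction[where f' = "\<lambda>t. - (b t * (U t - V t))"])
    fix s :: real assume s: "s \<in> {0..1}"
    show "((\<lambda>t. U t - V t) has_vector_derivative - (b s * (U s - V s))) (at s within {0..1})"
      using U V s unfolding transport_def
      by (auto intro!: derivative_eq_intros simp: algebra_simps)
    show "norm (- (b s * (U s - V s))) \<le> q * norm (U s - V s) + 0"
      using b_small[OF s] by (simp add: order_trans[OF norm_mult_ineq] mult_right_mono)
  qed (use U V t q \<open>0 \<le> q\<close> in \<open>auto simp: transport_def\<close>)
  then show ?thesis by simp
qed

lemma norm_transport_le:
  fixes b :: "real \<Rightarrow> 'a::{real_normed_algebra_1,banach}"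
  assumes b_small: "\<And>t. t \<in> {0..1} \<Longrightarrow> norm (b t) \<le> q" and q: "q < 1"
    and U: "transport b U" and t: "t \<in> {0..1}"
  shows "norm (U t) \<le> 1 / (1 - q)"
proof -
  have "0 \<le> q" using b_small[of 0] by (auto intro: order_trans[OF norm_ge_zero])
  have "norm (U t - 1) \<le> q / (1 - q)"
  proof (rule gronwall_contraction[where f' = "\<lambda>t. - (b t * U t)"])
    fix s :: real assume s: "s \<in> {0..1}"
    show "((\<lambda>t. U t - 1) has_vector_derivative - (b s * U s)) (at s within {0..1})"
      using U s unfolding transport_def by (auto intro!: derivative_eq_intros)
    have "norm (- (b s * U s)) \<le> q * norm (U s)"
      using b_small[OF s] by (simp add: order_trans[OF norm_mult_ineq] mult_right_mono)
    also have "\<dots> \<le> q * (norm (U s - 1) + 1)"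
      using norm_triangle_ineq[of "U s - 1" 1] \<open>0 \<le> q\<close> by (intro mult_left_mono) auto
    finally show "norm (- (b s * U s)) \<le> q * norm (U s - 1) + q"
      by (simp add: algebra_simps)
  qed (use U t q \<open>0 \<le> q\<close> in \<open>auto simp: transport_def\<close>)
  then have "norm (U t) \<le> 1 + q / (1 - q)"
    using norm_triangle_ineq[of "U t - 1" 1] by simp
  also have "\<dots> = 1 / (1 - q)" using q by (simp add: field_simps)
  finally show ?thesis .
qed

lemma norm_transport_diff_le:
  fixes b1 b2 :: "real \<Rightarrow> 'a::{real_normed_algebra_1,banach}"
  assumes b1_small: "\<And>t. t \<in> {0..1} \<Longrightarrow> norm (b1 t) \<le> q" and q: "q < 1"
    and U1: "transport b1 U1" and U2: "transport b2 U2"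
    and close: "\<And>t. t \<in> {0..1} \<Longrightarrow> norm (b1 t - b2 t) \<le> \<rho>"
    and U2_bound: "\<And>t. t \<in> {0..1} \<Longrightarrow> norm (U2 t) \<le> M"
    and t: "t \<in> {0..1}"
  shows "norm (U1 t - U2 t) \<le> M * \<rho> / (1 - q)"
proof -
  have "0 \<le> q" using b1_small[of 0] by (auto intro: order_trans[OF norm_ge_zero])
  have "0 \<le> \<rho>" "0 \<le> M"
    using close[of 0] U2_bound[of 0] by (auto intro: order_trans[OF norm_ge_zero])
  show ?thesis
  proof (rule gronwall_contraction[where f' = "\<lambda>t. - (b1 t * (U1 t - U2 t)) - (b1 t - b2 t) * U2 t"])
    fix s :: real assume s: "s \<in> {0..1}"
    show "((\<lambda>t. U1 t - U2 t) has_vector_derivative - (b1 s * (U1 s - U2 s)) - (b1 s - b2 s) * U2 s)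
        (at s within {0..1})"
      using U1 U2 s unfolding transport_def
      by (auto intro!: derivative_eq_intros simp: algebra_simps)
    have "norm (- (b1 s * (U1 s - U2 s)) - (b1 s - b2 s) * U2 s)
        \<le> norm (b1 s) * norm (U1 s - U2 s) + norm (b1 s - b2 s) * norm (U2 s)"
      by (rule order_trans[OF norm_triangle_ineq4 add_mono]) (simp_all add: norm_mult_ineq)
    also have "\<dots> \<le> q * norm (U1 s - U2 s) + \<rho> * M"
      using b1_small[OF s] close[OF s] U2_bound[OF s] \<open>0 \<le> q\<close> \<open>0 \<le> \<rho>\<close>
      by (intro add_mono mult_mono) auto
    finally show "norm (- (b1 s * (U1 s - U2 s)) - (b1 s - b2 s) * U2 s) \<le> q * norm (U1 s - U2 s) + M * \<rho>"
      by (simp add: mult.commute)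
  qed (use U1 U2 t q \<open>0 \<le> q\<close> \<open>0 \<le> \<rho>\<close> \<open>0 \<le> M\<close> in \<open>auto simp: transport_def\<close>)
qed

lemma pexp_neg_eq_transport:
  fixes b :: "real \<Rightarrow> 'a::{real_normed_algebra_1,banach}"
  assumes b_small: "\<And>t. t \<in> {0..1} \<Longrightarrow> norm (b t) \<le> q" and q: "q < 1" and U: "transport b U"
  shows "pexp_neg b = U 1"
  unfolding pexp_neg_def
proof (rule the_equality)
  show "\<exists>V. V 0 = 1 \<and> (\<forall>t\<in>{0..1}. (V has_vector_derivative - (b t * V t)) (at t within {0..1})) \<and> V 1 = U 1"
    using U unfolding transport_def by blast
  fix x assume "\<exists>V. V 0 = 1 \<and> (\<forall>t\<in>{0..1}. (V has_vector_derivative - (b t * V t)) (at t within {0..1})) \<and> V 1 = x"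
  then obtain V where "transport b V" "V 1 = x" unfolding transport_def by blast
  then show "x = U 1" using transport_unique[OF b_small q _ U, of V 1] by simp
qed

lemma transport_const:
  fixes c :: "'a::{real_normed_algebra_1,banach}"
  shows "transport (\<lambda>t. c) (\<lambda>t. exp (t *\<^sub>R (- c)))"
  unfolding transport_def
  using has_vector_derivative_at_within[OF exp_scaleR_has_vector_derivative_left[of "- c"]]
  by simp

lemma pexp_neg_cong:
  assumes "\<And>t. t \<in> {0..1} \<Longrightarrow> b t = b' t"
  shows "pexp_neg b = pexp_neg b'"
proof -
  have "(\<forall>t\<in>{0..1}. (U has_vector_derivative - (b t * U t)) (at t within {0..1})) \<longleftrightarrow>
      (\<forall>t\<in>{0..1}. (U has_vector_derivative - (b' t * U t)) (at t within {0..1}))" for U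
    using assms by auto
  then show ?thesis
    unfolding pexp_neg_def by simp
qed

(* Up to the error epsilon, b' is the gauge transform of b by 1 + delta k, whose transport is
   (1 + delta k) U. *)
lemma transport_gauge_variation:
  fixes b b' k k' :: "real \<Rightarrow> 'a::{real_normed_algebra_1,banach}"
  assumes U: "transport b U" and U': "transport b' U'"
    and k: "\<And>t. t \<in> {0..1} \<Longrightarrow> (k has_vector_derivative k' t) (at t within {0..1})" and k0: "k 0 = 0"
    and b'_small: "\<And>t. t \<in> {0..1} \<Longrightarrow> norm (b' t) \<le> q" and q: "q < 1"
    and U_bound: "\<And>t. t \<in> {0..1} \<Longrightarrow> norm (U t) \<le> M"
    and k_bound: "\<And>t. t \<in> {0..1} \<Longrightarrow> norm (k t) \<le> K"
    and close: "\<And>t. t \<in> {0..1} \<Longrightarrow> norm (b' t - b t) \<le> \<eta>"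
    and first_order: "\<And>t. t \<in> {0..1} \<Longrightarrow>
      norm (b' t - b t + \<delta> *\<^sub>R (k' t + lie_bracket (b t) (k t))) \<le> \<epsilon>"
    and t: "t \<in> {0..1}"
  shows "norm (U' t - U t - \<delta> *\<^sub>R (k t * U t)) \<le> (\<bar>\<delta>\<bar> * \<eta> * K + \<epsilon>) * M / (1 - q)"
proof -
  have nonneg: "0 \<le> q" "0 \<le> M" "0 \<le> K" "0 \<le> \<eta>" "0 \<le> \<epsilon>"
    using b'_small[of 0] U_bound[of 0] k_bound[of 0] close[of 0] first_order[of 0]
    by (auto intro: order_trans[OF norm_ge_zero])
  define Z where "Z t = U' t - U t - \<delta> *\<^sub>R (k t * U t)" for t
  define \<rho> where "\<rho> t = b' t - b t + \<delta> *\<^sub>R (k' t + lie_bracket (b t) (k t))" for t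
  show ?thesis
    unfolding Z_def[symmetric]
  proof (rule gronwall_contraction[where f' = "\<lambda>t. - (b' t * Z t) - \<delta> *\<^sub>R ((b' t - b t) * (k t * U t)) - \<rho> t * U t"])
    fix s :: real assume s: "s \<in> {0..1}"
    have "(Z has_vector_derivative - (b' s * U' s) + b s * U s - \<delta> *\<^sub>R (k s * - (b s * U s) + k' s * U s))
        (at s within {0..1})"
      unfolding Z_def using U U' k[OF s] s
      by (auto simp: transport_def intro!: derivative_eq_intros)
    moreover have "- (b' s * U' s) + b s * U s - \<delta> *\<^sub>R (k s * - (b s * U s) + k' s * U s)
        = - (b' s * Z s) - \<delta> *\<^sub>R ((b' s - b s) * (k s * U s)) - \<rho> s * U s"
      by (simp add: Z_def \<rho>_def lie_bracket_def algebra_simps)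
    ultimately show "(Z has_vector_derivative
        - (b' s * Z s) - \<delta> *\<^sub>R ((b' s - b s) * (k s * U s)) - \<rho> s * U s) (at s within {0..1})"
      by simp
    have "norm (\<delta> *\<^sub>R ((b' s - b s) * (k s * U s))) \<le> \<bar>\<delta>\<bar> * (\<eta> * (K * M))"
      using close[OF s] k_bound[OF s] U_bound[OF s] nonneg
      by (auto intro!: mult_left_mono order_trans[OF norm_mult_ineq] mult_mono)
    moreover have "norm (\<rho> s * U s) \<le> \<epsilon> * M"
      using first_order[OF s] U_bound[OF s] nonneg unfolding \<rho>_def
      by (auto intro!: order_trans[OF norm_mult_ineq] mult_mono)
    moreover have "norm (b' s * Z s) \<le> q * norm (Z s)"
      using b'_small[OF s] by (auto intro!: order_trans[OF norm_mult_ineq] mult_right_mono)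
    ultimately show "norm (- (b' s * Z s) - \<delta> *\<^sub>R ((b' s - b s) * (k s * U s)) - \<rho> s * U s)
        \<le> q * norm (Z s) + (\<bar>\<delta>\<bar> * \<eta> * K + \<epsilon>) * M"
      using norm_triangle_ineq4[of "- (b' s * Z s) - \<delta> *\<^sub>R ((b' s - b s) * (k s * U s))" "\<rho> s * U s"]
        norm_triangle_ineq4[of "- (b' s * Z s)" "\<delta> *\<^sub>R ((b' s - b s) * (k s * U s))"]
      by (simp add: algebra_simps)
  qed (use U U' k0 q t nonneg in \<open>auto simp: Z_def transport_def\<close>)
qed

section \<open>The logarithm of an exponential\<close>

lemma power_has_vector_derivative_commuting:
  fixes w :: "real \<Rightarrow> 'a::real_normed_algebra_1"
  assumes w': "(w has_vector_derivative w') (at s within S)" and comm: "w s * w' = w' * w s"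
  shows "((\<lambda>s. w s ^ Suc n) has_vector_derivative of_nat (Suc n) *\<^sub>R (w s ^ n * w')) (at s within S)"
proof (induction n)
  case (Suc n)
  have "w' * w s ^ Suc n = w s ^ Suc n * w'"
    by (rule power_commuting_commutes[OF comm, symmetric])
  then have "w s * (of_nat (Suc n) *\<^sub>R (w s ^ n * w')) + w' * w s ^ Suc n
      = of_nat (Suc (Suc n)) *\<^sub>R (w s ^ Suc n * w')"
    by (simp add: mult.assoc algebra_simps scaleR_2)
  with has_vector_derivative_mult[OF w' Suc] show ?case by simp
qed (use w' in simp)

lemma norm_alternating_sum_minus_le:
  fixes w x :: "'a::real_normed_algebra_1"
  assumes comm: "x * w = w * x" and w: "norm w \<le> 1/2"
  shows "norm ((\<Sum>i<n. (-1::real) ^ i *\<^sub>R (w ^ i * (x * (1 + w)))) - x) \<le> (1/2) ^ n * norm x"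
proof -
  have telescope: "(\<Sum>i<n. (-1::real) ^ i *\<^sub>R (w ^ i * (x * (1 + w)))) = x - (-1::real) ^ n *\<^sub>R (w ^ n * x)"
  proof (induction n)
    case (Suc n)
    have "w ^ n * (x * w) = w ^ Suc n * x"
      by (simp only: comm power_Suc2 mult.assoc)
    then have "w ^ n * (x * (1 + w)) = w ^ n * x + w ^ Suc n * x"
      by (simp add: distrib_left)
    with Suc show ?case by (simp add: algebra_simps)
  qed simp
  have "norm (w ^ n * x) \<le> (1/2) ^ n * norm x"
    using w by (intro order_trans[OF norm_mult_ineq] mult_right_mono order_trans[OF norm_power_ineq] power_mono)
      auto
  then show ?thesis by (simp add: telescope)
qed

lemma norm_exp_scaleR_minus_one_le:
  fixes x :: "'a::{real_normed_algebra_1,banach}"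
  assumes x: "norm x \<le> 1/4" and s: "s \<in> {0..1}"
  shows "norm (exp (s *\<^sub>R x) - 1) \<le> 1/2"
proof -
  have "norm (exp (s *\<^sub>R x) - exp (0 *\<^sub>R x)) \<le> 1/2 * s - 1/2 * 0"
  proof (rule norm_diff_le_majorant[where f' = "\<lambda>r. x * exp (r *\<^sub>R x)" and g' = "\<lambda>_. 1/2"])
    fix r assume r: "r \<in> {0..s}"
    show "((\<lambda>r. exp (r *\<^sub>R x)) has_vector_derivative x * exp (r *\<^sub>R x)) (at r within {0..s})"
      by (rule has_vector_derivative_at_within[OF exp_scaleR_has_vector_derivative_left])
    show "((\<lambda>r. 1/2 * r) has_real_derivative 1/2) (at r within {0..s})"
      by (auto intro!: derivative_eq_intros)
    have "r * norm x \<le> 1 * (1/4)" using r s x by (intro mult_mono) auto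
    then have "norm (r *\<^sub>R x) \<le> 1/2" using r by simp
    then have "norm (exp (r *\<^sub>R x)) \<le> 2" by (rule exp_bound_half)
    then have "norm x * norm (exp (r *\<^sub>R x)) \<le> 1/4 * 2" using x by (intro mult_mono) auto
    then show "norm (x * exp (r *\<^sub>R x)) \<le> 1/2" using norm_mult_ineq[of x "exp (r *\<^sub>R x)"] by linarith
  qed (use s in auto)
  then show ?thesis using s by simp
qed

(* With w = exp (s x) - 1 one has w' = x (1 + w) and x commutes with w, so the termwise
   derivatives of the logarithm series telescope to x. *)
lemma alg_log_exp_scaleR_has_derivative:
  fixes x :: "'a::{real_normed_algebra_1,banach}"
  assumes x: "norm x \<le> 1/4" and s: "s \<in> {0..1}"
  shows "((\<lambda>s. alg_log (exp (s *\<^sub>R x))) has_derivative (\<lambda>h. h *\<^sub>R x)) (at s within {0..1})"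
proof -
  define w where "w s = exp (s *\<^sub>R x) - 1" for s :: real
  define f where "f n s = ((-1) ^ n / real (Suc n)) *\<^sub>R w s ^ Suc n" for n s
  define f' where "f' n s h = h *\<^sub>R ((-1::real) ^ n *\<^sub>R (w s ^ n * (x * (1 + w s))))" for n s and h :: real
  have comm: "x * w s = w s * x" for s
    using exp_times_scaleR_commute[of s x] by (simp add: w_def algebra_simps)
  have w': "(w has_vector_derivative x * (1 + w s)) (at s within {0..1})" for s
    unfolding w_def using has_vector_derivative_at_within[OF exp_scaleR_has_vector_derivative_left]
    by (auto intro!: derivative_eq_intros)
  have f_deriv: "(f n has_derivative f' n s) (at s within {0..1})" for n s
  proof -
    have "w s * (x * (1 + w s)) = (x * w s) * (1 + w s)"
      by (simp only: comm mult.assoc)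
    also have "\<dots> = x * (1 + w s) * w s"
      by (simp add: distrib_left distrib_right mult.assoc)
    finally have "((\<lambda>s. ((-1) ^ n / real (Suc n)) *\<^sub>R w s ^ Suc n) has_vector_derivative
        ((-1) ^ n / real (Suc n)) *\<^sub>R (of_nat (Suc n) *\<^sub>R (w s ^ n * (x * (1 + w s)))))
        (at s within {0..1})"
      by (rule bounded_linear.has_vector_derivative[OF bounded_linear_scaleR_right
            power_has_vector_derivative_commuting[OF w']])
    then show ?thesis
      by (simp add: f_def[abs_def] f'_def[abs_def] has_vector_derivative_def del: of_nat_Suc)
  qed
  have sums_at_0: "(\<lambda>n. f n 0) sums 0"
    by (simp add: f_def w_def sums_zero)
  have "\<exists>g. \<forall>s\<in>{0..1}. (\<lambda>n. f n s) sums g s \<and> (g has_derivative (\<lambda>h. h *\<^sub>R x)) (at s within {0..1})"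
  proof (rule has_derivative_series[where f' = f' and x = 0])
    fix e :: real assume "e > 0"
    have "(\<lambda>n. (1/2::real) ^ n) \<longlonglongrightarrow> 0" by real_asymp
    then have "\<forall>\<^sub>F n in sequentially. (1/2::real) ^ n < e"
      using \<open>e > 0\<close> by (rule order_tendstoD(2))
    then show "\<forall>\<^sub>F n in sequentially. \<forall>s\<in>{0..1}. \<forall>h. norm ((\<Sum>i<n. f' i s h) - h *\<^sub>R x) \<le> e * norm h"
    proof (rule eventually_mono, intro ballI allI)
      fix n :: nat and s h :: real assume n: "(1/2::real) ^ n < e" and s: "s \<in> {0..1}"
      have "(\<Sum>i<n. f' i s h) - h *\<^sub>R x = h *\<^sub>R ((\<Sum>i<n. (-1::real) ^ i *\<^sub>R (w s ^ i * (x * (1 + w s)))) - x)"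
        by (simp add: f'_def scaleR_sum_right scaleR_diff_right)
      moreover have "norm ((\<Sum>i<n. (-1::real) ^ i *\<^sub>R (w s ^ i * (x * (1 + w s)))) - x) \<le> e"
      proof -
        have "(1/2::real) ^ n * norm x \<le> (1/2) ^ n * 1"
          using x by (intro mult_left_mono) auto
        then show ?thesis
          using norm_alternating_sum_minus_le[OF comm norm_exp_scaleR_minus_one_le[OF x s, folded w_def], of n] n
          by linarith
      qed
      ultimately show "norm ((\<Sum>i<n. f' i s h) - h *\<^sub>R x) \<le> e * norm h"
        by (simp add: mult.commute[of e] mult_left_mono)
    qed
  qed (use f_deriv sums_at_0 in auto)
  then obtain g where g: "\<And>s. s \<in> {0..1} \<Longrightarrow> (\<lambda>n. f n s) sums g s \<and> (g has_derivative (\<lambda>h. h *\<^sub>R x)) (at s within {0..1})"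
    by blast
  have eq: "alg_log (exp (s' *\<^sub>R x)) = g s'" if "s' \<in> {0..1}" for s'
    using sums_unique[OF conjunct1[OF g[OF that]]] by (simp add: alg_log_def f_def w_def)
  show ?thesis
    by (rule has_derivative_transform[OF s eq conjunct2[OF g[OF s]]])
qed

lemma alg_log_exp:
  fixes x :: "'a::{real_normed_algebra_1,banach}"
  assumes x: "norm x \<le> 1/4"
  shows "alg_log (exp x) = x"
proof -
  have "\<exists>c. \<forall>s\<in>{0..1}. alg_log (exp (s *\<^sub>R x)) - s *\<^sub>R x = c"
  proof (rule has_derivative_zero_constant)
    fix s :: real assume "s \<in> {0..1}"
    with alg_log_exp_scaleR_has_derivative[OF x]
    have "((\<lambda>s. alg_log (exp (s *\<^sub>R x)) - s *\<^sub>R x) has_derivative (\<lambda>h. h *\<^sub>R x - h *\<^sub>R x)) (at s within {0..1})"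
      by (auto intro!: derivative_eq_intros)
    then show "((\<lambda>s. alg_log (exp (s *\<^sub>R x)) - s *\<^sub>R x) has_derivative (\<lambda>h. 0)) (at s within {0..1})"
      by simp
  qed simp
  then obtain c where c: "\<And>s. s \<in> {0..1} \<Longrightarrow> alg_log (exp (s *\<^sub>R x)) - s *\<^sub>R x = c"
    by blast
  have "alg_log (exp (0 *\<^sub>R x)) = 0"
    by (simp add: alg_log_def)
  then show ?thesis
    using c[of 0] c[of 1] by simp
qed

section \<open>The flow\<close>

lemma norm_lie_bracket_le: "norm (lie_bracket x y) \<le> 2 * norm x * norm y"
proof -
  have "norm (lie_bracket x y) \<le> norm (x * y) + norm (y * x)"
    unfolding lie_bracket_def by (rule norm_triangle_ineq4)
  also have "\<dots> \<le> norm x * norm y + norm y * norm x"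
    by (intro add_mono norm_mult_ineq)
  finally show ?thesis by simp
qed

locale kappa_flow =
  fixes aa :: "real \<Rightarrow> real \<Rightarrow> 'a::{real_normed_algebra_1,banach}"
  assumes continuous: "continuous_on ({0..} \<times> {0..1}) (\<lambda>(T, t). aa T t)"
    and flow_equation: "\<And>T t. T \<ge> 0 \<Longrightarrow> t \<in> {0..1} \<Longrightarrow>
        ((\<lambda>T'. aa T' t) has_vector_derivative - covd (aa T) (kappaA (aa T)) t) (at T within {0..})"
begin

definition mean :: "real \<Rightarrow> 'a" where
  "mean T = integral {0..1} (aa T)"

definition dev :: "real \<Rightarrow> real \<Rightarrow> 'a" where
  "dev T t = aa T t - mean T"

definition bracket :: "real \<Rightarrow> real \<Rightarrow> 'a" where
  "bracket T t = lie_bracket (aa T t) (kappaA (aa T) t)"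

lemma continuous_on_aa: "T \<ge> 0 \<Longrightarrow> continuous_on {0..1} (aa T)"
  using continuous_on_prod_slice_left[OF continuous] by simp

lemma continuous_on_mean: "continuous_on {0..} mean"
  using integral_continuous_on_param[of "{0..}" 0 1 aa] continuous
  by (simp add: mean_def[abs_def] cbox_interval)

lemma continuous_on_mean_fst: "continuous_on ({0..} \<times> {0..1}) (\<lambda>(T, t::real). mean T)"
proof -
  have "continuous_on ({0..} \<times> {0..1::real}) (\<lambda>p. mean (fst p))"
    by (rule continuous_on_compose2[OF continuous_on_mean]) (auto intro!: continuous_intros)
  then show ?thesis by (simp add: split_beta)
qed

lemma kappaA_aa_eq: "T \<ge> 0 \<Longrightarrow> t \<in> {0..1} \<Longrightarrow> kappaA (aa T) t = integral {0..t} (aa T) - t *\<^sub>R mean T"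
  unfolding mean_def by (rule kappaA_eq[OF continuous_on_aa])

lemma continuous_on_kappaA_aa: "continuous_on ({0..} \<times> {0..1}) (\<lambda>(T, t). kappaA (aa T) t)"
proof -
  have "continuous_on ({0..} \<times> {0..1}) (\<lambda>(T, t). integral {0..t} (aa T) - t *\<^sub>R mean T)"
    using continuous_on_indefinite_integral_prod[OF continuous] continuous_on_mean_fst
    by (auto simp: split_beta intro!: continuous_intros)
  then show ?thesis
    by (rule continuous_on_eq) (auto simp: kappaA_aa_eq)
qed

lemma continuous_on_dev: "continuous_on ({0..} \<times> {0..1}) (\<lambda>(T, t). dev T t)"
  using continuous continuous_on_mean_fst
  by (auto simp: dev_def split_beta intro!: continuous_intros)

lemma continuous_on_bracket: "continuous_on ({0..} \<times> {0..1}) (\<lambda>(T, t). bracket T t)"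
  using continuous continuous_on_kappaA_aa
  by (auto simp: bracket_def lie_bracket_def split_beta intro!: continuous_intros)

lemma aa_has_vector_derivative:
  assumes "T \<ge> 0" "t \<in> {0..1}"
  shows "((\<lambda>T'. aa T' t) has_vector_derivative - (dev T t + bracket T t)) (at T within {0..})"
  using flow_equation[OF assms] vector_derivative_kappaA[OF continuous_on_aa[OF assms(1)] assms(2)]
  by (simp add: covd_def dev_def bracket_def mean_def)

lemma integral_dev: "T \<ge> 0 \<Longrightarrow> integral {0..1} (dev T) = 0"
  using continuous_on_aa
  by (simp add: dev_def[abs_def] mean_def integral_diff integrable_continuous_interval)

lemma kappaA_aa_eq_integral_dev:
  assumes T: "T \<ge> 0" and t: "t \<in> {0..1}"
  shows "kappaA (aa T) t = integral {0..t} (dev T)"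
proof -
  have "aa T integrable_on {0..t}"
    by (rule integrable_continuous_interval, rule continuous_on_subset[OF continuous_on_aa[OF T]])
       (use t in auto)
  then have "integral {0..t} (dev T) = integral {0..t} (aa T) - integral {0..t} (\<lambda>_. mean T)"
    unfolding dev_def by (intro integral_diff) auto
  then show ?thesis
    using t by (simp add: kappaA_aa_eq[OF T t])
qed

lemma mean_has_vector_derivative:
  assumes T: "T \<ge> 0"
  shows "(mean has_vector_derivative - integral {0..1} (bracket T)) (at T within {0..})"
proof -
  have "((\<lambda>T. integral (cbox 0 1) (aa T)) has_vector_derivative
      integral (cbox 0 1) (\<lambda>t. - (dev T t + bracket T t))) (at T within {0..})"
    by (rule leibniz_rule_vector_derivative)
       (use T aa_has_vector_derivative continuous_on_aa continuous_on_dev continuous_on_bracket in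
         \<open>auto simp: cbox_interval split_beta intro!: integrable_continuous_interval continuous_intros\<close>)
  moreover have "integral {0..1} (\<lambda>t. - (dev T t + bracket T t)) = - integral {0..1} (bracket T)"
  proof -
    have "dev T integrable_on {0..1}" "bracket T integrable_on {0..1}"
      using continuous_on_prod_slice_left[OF continuous_on_dev, of T]
        continuous_on_prod_slice_left[OF continuous_on_bracket, of T] T
      by (auto intro: integrable_continuous_interval)
    then show ?thesis
      using integral_dev[OF T] by (simp only: integral_neg integral_add) simp
  qed
  ultimately show ?thesis
    by (simp add: mean_def[abs_def] cbox_interval)
qed

lemma dev_has_vector_derivative:
  assumes "T \<ge> 0" "t \<in> {0..1}"
  shows "((\<lambda>T. dev T t) has_vector_derivative - dev T t - bracket T t + integral {0..1} (bracket T))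
    (at T within {0..})"
  using has_vector_derivative_diff[OF aa_has_vector_derivative[OF assms] mean_has_vector_derivative[OF assms(1)]]
  by (simp add: dev_def[abs_def] algebra_simps)

(* The linear part of the flow damps dev at rate 1; the weaker rate 1/2 leaves room for the
   quadratic terms. *)
definition controlled :: "real \<Rightarrow> bool" where
  "controlled s \<longleftrightarrow> (\<forall>t\<in>{0..1}. norm (dev s t) \<le> exp (- (s/2)) / 100) \<and> norm (mean s) \<le> 1/200"

lemma controlled_bounds:
  assumes s: "s \<ge> 0" and ctrl: "controlled s" and t: "t \<in> {0..1}"
  shows "norm (aa s t) \<le> 3/200"
    and "norm (kappaA (aa s) t) \<le> exp (- (s/2)) / 100"
    and "norm (bracket s t) \<le> 3/10000 * exp (- (s/2))"
    and "norm (integral {0..1} (bracket s)) \<le> 3/10000 * exp (- (s/2))"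
proof -
  define E where "E = exp (- (s/2))"
  have "0 < E" "E \<le> 1" using s by (auto simp: E_def)
  have dev: "norm (dev s r) \<le> E / 100" if "r \<in> {0..1}" for r
    using ctrl that by (simp add: controlled_def E_def)
  have aa: "norm (aa s r) \<le> 3/200" if r: "r \<in> {0..1}" for r
    using norm_triangle_ineq[of "dev s r" "mean s"] dev[OF r] \<open>E \<le> 1\<close> ctrl
    by (simp add: dev_def controlled_def)
  have kappa: "norm (kappaA (aa s) r) \<le> E / 100" if r: "r \<in> {0..1}" for r
  proof -
    have "norm (integral {0..r} (dev s)) \<le> E / 100 * (r - 0)"
    proof (rule integral_bound)
      show "continuous_on {0..r} (dev s)"
        using continuous_on_prod_slice_left[OF continuous_on_dev, of s] s r
        by (auto intro: continuous_on_subset)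
    qed (use r dev in auto)
    also have "\<dots> \<le> E / 100" using r \<open>0 < E\<close> by (simp add: mult_left_le)
    finally show ?thesis using kappaA_aa_eq_integral_dev[OF s r] by simp
  qed
  have bracket: "norm (bracket s r) \<le> 3/10000 * E" if r: "r \<in> {0..1}" for r
  proof -
    have "norm (bracket s r) \<le> 2 * norm (aa s r) * norm (kappaA (aa s) r)"
      unfolding bracket_def by (rule norm_lie_bracket_le)
    also have "\<dots> \<le> 2 * (3/200) * (E / 100)"
      using aa[OF r] kappa[OF r] by (intro mult_mono) auto
    finally show ?thesis by simp
  qed
  have "norm (integral {0..1} (bracket s)) \<le> 3/10000 * E * (1 - 0)"
    using continuous_on_prod_slice_left[OF continuous_on_bracket, of s] s bracket
    by (intro integral_bound) auto
  with aa[OF t] kappa[OF t] bracket[OF t]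
  show "norm (aa s t) \<le> 3/200"
    and "norm (kappaA (aa s) t) \<le> exp (- (s/2)) / 100"
    and "norm (bracket s t) \<le> 3/10000 * exp (- (s/2))"
    and "norm (integral {0..1} (bracket s)) \<le> 3/10000 * exp (- (s/2))"
    by (simp_all add: E_def)
qed

lemma mean_increment:
  assumes T1: "0 \<le> T1" and T12: "T1 \<le> T2" and ctrl: "\<And>s. s \<in> {T1..T2} \<Longrightarrow> controlled s"
  shows "norm (mean T2 - mean T1) \<le> 6/10000 * exp (- (T1/2))"
proof -
  have "norm (mean T2 - mean T1) \<le> - 6/10000 * exp (- (T2/2)) - (- 6/10000 * exp (- (T1/2)))"
  proof (rule norm_diff_le_majorant[where f' = "\<lambda>s. - integral {0..1} (bracket s)"
        and g' = "\<lambda>s. 3/10000 * exp (- (s/2))"])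
    fix s assume s: "s \<in> {T1..T2}"
    then have "s \<ge> 0" using T1 by simp
    show "(mean has_vector_derivative - integral {0..1} (bracket s)) (at s within {T1..T2})"
      by (rule has_vector_derivative_within_subset[OF mean_has_vector_derivative[OF \<open>s \<ge> 0\<close>]])
         (use T1 in auto)
    show "((\<lambda>s. - 6/10000 * exp (- (s/2))) has_real_derivative 3/10000 * exp (- (s/2))) (at s within {T1..T2})"
      by (auto intro!: derivative_eq_intros)
    show "norm (- integral {0..1} (bracket s)) \<le> 3/10000 * exp (- (s/2))"
      using controlled_bounds(4)[OF \<open>s \<ge> 0\<close> ctrl[OF s], of 0] by simp
  qed (use T12 in auto)
  moreover have "exp (- (T2/2)) > 0" by simp
  ultimately show ?thesis by linarith
qed

(* exp T is the integrating factor of the linear part of dev' = - dev - bracket + int bracket. *)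
lemma exp_scaleR_dev_increment:
  assumes T: "T \<ge> 0" and ctrl: "\<And>s. s \<in> {0..T} \<Longrightarrow> controlled s" and t: "t \<in> {0..1}"
  shows "norm (exp T *\<^sub>R dev T t - dev 0 t) \<le> 12/10000 * (exp (T/2) - 1)"
proof -
  have "norm (exp T *\<^sub>R dev T t - exp 0 *\<^sub>R dev 0 t) \<le> 12/10000 * exp (T/2) - 12/10000 * exp (0/2)"
  proof (rule norm_diff_le_majorant[where f' = "\<lambda>s. exp s *\<^sub>R (- bracket s t + integral {0..1} (bracket s))"
        and g' = "\<lambda>s. 6/10000 * exp (s/2)"])
    fix s assume s: "s \<in> {0..T}"
    have "((\<lambda>s. exp s *\<^sub>R dev s t) has_vector_derivative
        exp s *\<^sub>R (- dev s t - bracket s t + integral {0..1} (bracket s)) + exp s *\<^sub>R dev s t) (at s within {0..T})"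
      by (intro has_vector_derivative_scaleR DERIV_exp[THEN DERIV_subset]
          has_vector_derivative_within_subset[OF dev_has_vector_derivative]) (use s t in auto)
    then show "((\<lambda>s. exp s *\<^sub>R dev s t) has_vector_derivative
        exp s *\<^sub>R (- bracket s t + integral {0..1} (bracket s))) (at s within {0..T})"
      by (simp add: algebra_simps)
    show "((\<lambda>s. 12/10000 * exp (s/2)) has_real_derivative 6/10000 * exp (s/2)) (at s within {0..T})"
      by (auto intro!: derivative_eq_intros)
    have "norm (- bracket s t + integral {0..1} (bracket s)) \<le> 6/10000 * exp (- (s/2))"
      using controlled_bounds(3,4)[of s t] ctrl[OF s] s t
        norm_triangle_ineq[of "- bracket s t" "integral {0..1} (bracket s)"] by simp
    then have "exp s * norm (- bracket s t + integral {0..1} (bracket s)) \<le> 6/10000 * (exp s * exp (- (s/2)))"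
      by (simp add: mult_left_mono)
    also have "exp s * exp (- (s/2)) = exp (s/2)" by (simp flip: exp_add)
    finally show "norm (exp s *\<^sub>R (- bracket s t + integral {0..1} (bracket s))) \<le> 6/10000 * exp (s/2)"
      by simp
  qed (use T in auto)
  then show ?thesis by (simp add: algebra_simps)
qed

end

locale small_kappa_flow = kappa_flow +
  assumes small_initial: "\<And>t. t \<in> {0..1} \<Longrightarrow> norm (aa 0 t) \<le> 1/400"
begin

lemma norm_mean_0: "norm (mean 0) \<le> 1/400"
  using integral_bound[of 0 1 "aa 0" "1/400"] continuous_on_aa[of 0] small_initial
  by (simp add: mean_def)

lemma norm_dev_0: "t \<in> {0..1} \<Longrightarrow> norm (dev 0 t) \<le> 1/200"
  using norm_triangle_ineq4[of "aa 0 t" "mean 0"] small_initial[of t] norm_mean_0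
  by (simp add: dev_def)

lemma controlled_improves:
  assumes T: "T \<ge> 0" and ctrl: "\<And>s. s \<in> {0..T} \<Longrightarrow> controlled s"
  shows "norm (mean T) \<le> 4/1000"
    and "t \<in> {0..1} \<Longrightarrow> norm (dev T t) \<le> 8/1000 * exp (- (T/2))"
proof -
  show "norm (mean T) \<le> 4/1000"
    using mean_increment[OF order_refl T ctrl] norm_mean_0
      norm_triangle_ineq[of "mean T - mean 0" "mean 0"] by simp
next
  assume t: "t \<in> {0..1}"
  have "exp T * norm (dev T t) \<le> norm (exp T *\<^sub>R dev T t - dev 0 t) + norm (dev 0 t)"
    using norm_triangle_ineq[of "exp T *\<^sub>R dev T t - dev 0 t" "dev 0 t"] by simp
  also have "\<dots> \<le> 12/10000 * (exp (T/2) - 1) + 1/200"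
    using exp_scaleR_dev_increment[OF T ctrl t] norm_dev_0[OF t] by linarith
  also have "\<dots> \<le> 8/1000 * exp (T/2)"
  proof -
    have "12/10000 * (E - 1) + 1/200 \<le> 8/1000 * E" if "1 \<le> E" for E :: real
      using that by (simp add: right_diff_distrib)
    then show ?thesis by this (use T in simp)
  qed
  also have "exp T = exp (T/2) * exp (T/2)"
    by (simp flip: exp_add)
  finally have "exp (T/2) * (exp (T/2) * norm (dev T t)) \<le> exp (T/2) * (8/1000)"
    by (simp add: mult.assoc mult.commute)
  then have "exp (T/2) * norm (dev T t) \<le> 8/1000"
    by (simp add: mult_le_cancel_left_pos)
  then show "norm (dev T t) \<le> 8/1000 * exp (- (T/2))"
    by (simp add: exp_minus field_simps)
qed

lemma controlled_everywhere:
  assumes T: "T \<ge> 0"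
  shows "controlled T"
proof -
  define F where "F s t = max (norm (dev s t) * exp (s/2) * 100) (norm (mean s) * 200)" for s t
  have F_le_iff: "F s t \<le> 1 \<longleftrightarrow> norm (dev s t) \<le> exp (- (s/2)) / 100 \<and> norm (mean s) \<le> 1/200" for s t
    by (auto simp: F_def exp_minus field_simps)
  have "continuous_on ({0..} \<times> {0..1}) (\<lambda>(s, t). F s t)"
    using continuous_on_dev continuous_on_mean_fst
    unfolding F_def split_beta by (intro continuous_intros) auto
  then have F_le: "F T t \<le> 1" if "t \<in> {0..1}" for t
  proof (rule continuity_argument[where c = "4/5"])
    show "F 0 t \<le> 1" if "t \<in> {0..1}" for t
      using norm_dev_0[OF that] norm_mean_0 by (simp add: F_le_iff)
    show "F T' t \<le> 4/5" if "T' \<ge> 0" and below: "\<And>s t. s \<in> {0..T'} \<Longrightarrow> t \<in> {0..1} \<Longrightarrow> F s t \<le> 1"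
      and "t \<in> {0..1}" for T' t
    proof -
      have "controlled s" if "s \<in> {0..T'}" for s
        using below[OF that] below[OF that, of 0] by (simp add: controlled_def F_le_iff)
      with controlled_improves[OF \<open>T' \<ge> 0\<close>] \<open>t \<in> {0..1}\<close>
      have "norm (dev T' t) \<le> 8/1000 * exp (- (T'/2))" "norm (mean T') \<le> 4/1000"
        by auto
      then show ?thesis by (simp add: F_def exp_minus field_simps)
    qed
  qed (use T that in auto)
  then show ?thesis
    using F_le[of 0] by (simp add: controlled_def F_le_iff)
qed

lemma norm_aa_le: "T \<ge> 0 \<Longrightarrow> t \<in> {0..1} \<Longrightarrow> norm (aa T t) \<le> 3/200"
  using controlled_bounds(1)[OF _ controlled_everywhere] .

lemma norm_kappaA_aa_le:
  assumes "T \<ge> 0" "t \<in> {0..1}"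
  shows "norm (kappaA (aa T) t) \<le> 1/100"
proof -
  have "exp (- (T/2)) \<le> 1" using assms(1) by simp
  with controlled_bounds(2)[OF assms(1) controlled_everywhere[OF assms(1)] assms(2)] show ?thesis
    by linarith
qed

lemma norm_dev_le: "T \<ge> 0 \<Longrightarrow> t \<in> {0..1} \<Longrightarrow> norm (dev T t) \<le> exp (- (T/2)) / 100"
  using controlled_everywhere by (simp add: controlled_def)

lemma mean_converges:
  obtains c where "norm c \<le> 1/200" "\<And>T. T \<ge> 0 \<Longrightarrow> norm (mean T - c) \<le> 6/10000 * exp (- (T/2))"
    "(mean \<longlongrightarrow> c) at_top"
proof -
  have increment: "norm (mean T2 - mean T1) \<le> 6/10000 * exp (- (T1/2))" if "0 \<le> T1" "T1 \<le> T2" for T1 T2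
    using mean_increment[OF that] controlled_everywhere that by simp
  have "((\<lambda>T::real. 6/10000 * exp (- (T/2))) \<longlongrightarrow> 0) at_top"
    by real_asymp
  then obtain c where c: "\<And>T. T \<ge> 0 \<Longrightarrow> norm (mean T - c) \<le> 6/10000 * exp (- (T/2))"
    and "(mean \<longlongrightarrow> c) at_top"
    using tendsto_at_top_of_increment_bound[of mean "\<lambda>T. 6/10000 * exp (- (T/2))"] increment by blast
  moreover have "norm c \<le> 1/200"
    using c[of 0] norm_mean_0 norm_triangle_ineq4[of "mean 0 - c" "mean 0"] by simp
  ultimately show thesis
    using that by blast
qed

definition holonomy :: "real \<Rightarrow> real \<Rightarrow> 'a" where
  "holonomy T = (SOME U. transport (aa T) U)"

lemma transport_holonomy:
  assumes "T \<ge> 0"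
  shows "transport (aa T) (holonomy T)"
proof -
  have "\<exists>U. transport (aa T) U"
    using norm_aa_le[OF assms] by (intro transport_exists[OF continuous_on_aa[OF assms]]) force
  then show ?thesis
    unfolding holonomy_def by (rule someI_ex)
qed

lemma norm_holonomy_le: "T \<ge> 0 \<Longrightarrow> t \<in> {0..1} \<Longrightarrow> norm (holonomy T t) \<le> 4/3"
  using norm_transport_le[of "aa T" "1/4", OF _ _ transport_holonomy] norm_aa_le[of T] by force

(* The velocity -(dev + bracket) is the infinitesimal gauge transformation with parameter
   kappaA (aa T), which vanishes at t = 1. *)
lemma holonomy_end_has_derivative:
  assumes T: "T \<ge> 0"
  shows "((\<lambda>T. holonomy T 1) has_derivative (\<lambda>_. 0)) (at T within {0..})"
  unfolding has_derivative_within_alt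
proof (intro conjI allI impI)
  fix e :: real assume "e > 0"
  have velocity: "continuous_on ({0..} \<times> {0..1}) (\<lambda>(T, t). - (dev T t + bracket T t))"
    using continuous_on_dev continuous_on_bracket by (auto simp: split_beta intro!: continuous_intros)
  obtain r1 where "r1 > 0" and first_order: "\<And>S t. S \<ge> 0 \<Longrightarrow> \<bar>S - T\<bar> < r1 \<Longrightarrow> t \<in> {0..1} \<Longrightarrow>
      norm (aa S t - aa T t - (S - T) *\<^sub>R - (dev T t + bracket T t)) \<le> e/4 * \<bar>S - T\<bar>"
    using has_vector_derivative_uniformE[OF aa_has_vector_derivative velocity compact_Icc T, of "e/4"] \<open>e > 0\<close>
    by auto
  obtain r2 where "r2 > 0" and close: "\<And>S t. S \<in> {0..} \<Longrightarrow> dist S T < r2 \<Longrightarrow> t \<in> {0..1} \<Longrightarrow>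
      dist (aa S t) (aa T t) \<le> e/4"
    using continuous_on_prod_uniformE[OF continuous compact_Icc, of T "e/4"] T \<open>e > 0\<close> by auto
  show "\<exists>d>0. \<forall>S\<in>{0..}. norm (S - T) < d \<longrightarrow> norm (holonomy S 1 - holonomy T 1 - 0) \<le> e * norm (S - T)"
  proof (intro exI[of _ "min r1 r2"] conjI ballI impI)
    fix S :: real assume "S \<in> {0..}" "norm (S - T) < min r1 r2"
    then have S: "S \<ge> 0" "\<bar>S - T\<bar> < r1" "dist S T < r2" by (auto simp: dist_real_def)
    have "norm (holonomy S 1 - holonomy T 1 - (S - T) *\<^sub>R (kappaA (aa T) 1 * holonomy T 1))
        \<le> (\<bar>S - T\<bar> * (e/4) * (1/100) + e/4 * \<bar>S - T\<bar>) * (4/3) / (1 - 1/4)"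
    proof (rule transport_gauge_variation[OF transport_holonomy[OF T] transport_holonomy[OF S(1)]
          kappaA_has_vector_derivative[OF continuous_on_aa[OF T]]])
      fix t :: real assume t: "t \<in> {0..1}"
      show "norm (aa S t) \<le> 1/4" using norm_aa_le[OF S(1) t] by simp
      show "norm (holonomy T t) \<le> 4/3" by (rule norm_holonomy_le[OF T t])
      show "norm (kappaA (aa T) t) \<le> 1/100" by (rule norm_kappaA_aa_le[OF T t])
      show "norm (aa S t - aa T t) \<le> e/4" using close[of S t] S t by (simp add: dist_norm)
      have "aa S t - aa T t + (S - T) *\<^sub>R (aa T t - integral {0..1} (aa T) + lie_bracket (aa T t) (kappaA (aa T) t))
          = aa S t - aa T t - (S - T) *\<^sub>R - (dev T t + bracket T t)"
        by (simp add: dev_def bracket_def mean_def algebra_simps)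
      then show "norm (aa S t - aa T t + (S - T) *\<^sub>R (aa T t - integral {0..1} (aa T) + lie_bracket (aa T t) (kappaA (aa T) t)))
          \<le> e/4 * \<bar>S - T\<bar>"
        using first_order[OF S(1,2) t] by (simp only:)
    qed (use kappaA_endpoints[OF continuous_on_aa[OF T]] in auto)
    also have "\<dots> \<le> e * \<bar>S - T\<bar>"
      using \<open>e > 0\<close> by (simp add: field_simps)
    finally show "norm (holonomy S 1 - holonomy T 1 - 0) \<le> e * norm (S - T)"
      using kappaA_endpoints[OF continuous_on_aa[OF T]] by simp
  qed (use \<open>r1 > 0\<close> \<open>r2 > 0\<close> in auto)
qed simp

lemma holonomy_end_constant: "T \<ge> 0 \<Longrightarrow> holonomy T 1 = holonomy 0 1"
  using has_derivative_zero_constant[of "{0..}" "\<lambda>T. holonomy T 1"] holonomy_end_has_derivative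
  by (metis atLeast_iff convex_real_interval(1) order_refl)

lemma pexp_neg_initial_eq_exp:
  assumes c: "norm c \<le> 1/200"
    and mean_c: "\<And>T. T \<ge> 0 \<Longrightarrow> norm (mean T - c) \<le> 6/10000 * exp (- (T/2))"
  shows "pexp_neg (aa 0) = exp (- c)"
proof -
  define V where "V t = exp (t *\<^sub>R - c)" for t :: real
  have V: "transport (\<lambda>t. c) V"
    unfolding V_def[abs_def] by (rule transport_const)
  have V_bound: "norm (V t) \<le> 1 / (1 - 1/200)" if "t \<in> {0..1}" for t
    by (rule norm_transport_le[OF _ _ V that]) (use c in auto)
  have aa_close: "norm (aa T t - c) \<le> 2/100 * exp (- (T/2))" if "T \<ge> 0" "t \<in> {0..1}" for T t
  proof -
    have "norm (aa T t - c) \<le> norm (dev T t) + norm (mean T - c)"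
      using norm_triangle_ineq[of "dev T t" "mean T - c"] by (simp add: dev_def)
    with norm_dev_le[OF that] mean_c[OF that(1)] exp_gt_zero[of "- (T/2)"] show ?thesis
      by linarith
  qed
  have pexp_neg_eq: "pexp_neg (aa 0) = holonomy T 1" if "T \<ge> 0" for T
    using pexp_neg_eq_transport[OF _ _ transport_holonomy[of 0], of "1/4"] norm_aa_le[of 0]
      holonomy_end_constant[OF that] by force
  have bound: "norm (pexp_neg (aa 0) - exp (- c)) \<le> 1 / (1 - 1/200) * (2/100 * exp (- (T/2))) / (1 - 1/4)"
    if "T \<ge> 0" for T
  proof -
    have "norm (holonomy T 1 - V 1) \<le> 1 / (1 - 1/200) * (2/100 * exp (- (T/2))) / (1 - 1/4)"
      by (rule norm_transport_diff_le[OF _ _ transport_holonomy[OF that] V])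
         (use norm_aa_le aa_close V_bound that in force)+
    then show ?thesis using pexp_neg_eq[OF that] by (simp add: V_def)
  qed
  have "((\<lambda>T::real. 1 / (1 - 1/200) * (2/100 * exp (- (T/2))) / (1 - 1/4)) \<longlongrightarrow> 0) at_top"
    by real_asymp
  moreover have "\<forall>\<^sub>F T in at_top. norm (pexp_neg (aa 0) - exp (- c))
      \<le> 1 / (1 - 1/200) * (2/100 * exp (- (T/2))) / (1 - 1/4)"
    using eventually_ge_at_top[of "0::real"] by (rule eventually_mono) (rule bound)
  ultimately have "norm (pexp_neg (aa 0) - exp (- c)) \<le> 0"
    by (intro tendsto_le[OF trivial_limit_at_top_linorder _ tendsto_const])
  then show ?thesis by simp
qed

lemma mean_tendsto_neg_alg_log_pexp_neg: "(mean \<longlongrightarrow> - alg_log (pexp_neg (aa 0))) at_top"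
proof -
  obtain c where c: "norm c \<le> 1/200" "\<And>T. T \<ge> 0 \<Longrightarrow> norm (mean T - c) \<le> 6/10000 * exp (- (T/2))"
    and "(mean \<longlongrightarrow> c) at_top"
    using mean_converges by blast
  moreover have "alg_log (pexp_neg (aa 0)) = - c"
    using pexp_neg_initial_eq_exp[OF c] alg_log_exp[of "- c"] c(1) by simp
  ultimately show ?thesis by simp
qed

end

theorem mainTheorem12:
  fixes a :: "real \<Rightarrow> 'a::{real_normed_algebra_1,banach}"
  assumes "continuous_on {0..1} a"
  shows "\<forall>\<^sub>F \<epsilon> in nhds 0.
    \<forall>aa :: real \<Rightarrow> real \<Rightarrow> 'a.
      (\<forall>t\<in>{0..1}. aa 0 t = \<epsilon> *\<^sub>R a t)
      \<and> continuous_on ({0..} \<times> {0..1}) (\<lambda>(T, t). aa T t)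
      \<and> (\<forall>T\<ge>0. \<forall>t\<in>{0..1}.
           ((\<lambda>T'. aa T' t) has_vector_derivative
              (- covd (aa T) (kappaA (aa T)) t)) (at T within {0..}))
      \<longrightarrow> ((\<lambda>T. integral {0..1} (aa T))
            \<longlongrightarrow> - alg_log (pexp_neg (\<lambda>t. \<epsilon> *\<^sub>R a t))) at_top"
proof -
  obtain B where B: "B > 0" "\<And>t. t \<in> {0..1} \<Longrightarrow> norm (a t) \<le> B"
    using compact_imp_bounded[OF compact_continuous_image[OF assms compact_Icc]]
    by (auto simp: bounded_pos)
  have "((\<lambda>\<epsilon>::real. \<bar>\<epsilon>\<bar> * B) \<longlongrightarrow> 0) (nhds 0)"
    by (intro tendsto_mult_left_zero tendsto_rabs_zero filterlim_ident)
  then have "\<forall>\<^sub>F \<epsilon> in nhds 0. \<bar>\<epsilon>\<bar> * B < 1/400"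
    by (rule order_tendstoD(2)) simp
  then show ?thesis
  proof (rule eventually_mono, intro allI impI, elim conjE)
    fix \<epsilon> :: real and aa :: "real \<Rightarrow> real \<Rightarrow> 'a"
    assume small: "\<bar>\<epsilon>\<bar> * B < 1/400" and init: "\<forall>t\<in>{0..1}. aa 0 t = \<epsilon> *\<^sub>R a t"
      and "continuous_on ({0..} \<times> {0..1}) (\<lambda>(T, t). aa T t)"
      and "\<forall>T\<ge>0. \<forall>t\<in>{0..1}. ((\<lambda>T'. aa T' t) has_vector_derivative
              (- covd (aa T) (kappaA (aa T)) t)) (at T within {0..})"
    moreover have "norm (aa 0 t) \<le> 1/400" if "t \<in> {0..1}" for t
      using init mult_left_mono[OF B(2)[OF that], of "\<bar>\<epsilon>\<bar>"] small that by simp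
    ultimately interpret small_kappa_flow aa
      by unfold_locales auto
    show "((\<lambda>T. integral {0..1} (aa T)) \<longlongrightarrow> - alg_log (pexp_neg (\<lambda>t. \<epsilon> *\<^sub>R a t))) at_top"
      using mean_tendsto_neg_alg_log_pexp_neg pexp_neg_cong[of "aa 0" "\<lambda>t. \<epsilon> *\<^sub>R a t"] init
      by (simp add: mean_def[abs_def])
  qed
qed

end
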